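(* In the brand-effects model, fix $k$ with $0 \le k < s$, fix the ads placed in positions $1,\dots,k$, fix the eCPM bids of the remaining (not yet placed) non-brand advertisers (at least one), and fix the eCPM bids of all remaining brand advertisers except the one with the highest eCPM bid among the remaining brand advertisers, whose eCPM bid $v_b$ is allowed to vary (over values at least as large as the other remaining brand eCPM bids). Then exactly one of the following holds: it is optimal to show a brand ad in position $k+1$ for no value of $v_b$; it is optimal for every value of $v_b$; or there is a threshold $t$ such that it is optimal to show a brand ad in position $k+1$ if and only if $v_b \ge t$.
   Context: Brand-effects model: there are $s$ positions and a set of advertisers, each either a brand advertiser or a non-brand advertiser; advertiser $i$ has quality score $q_i \ge 0$ and bid $b_i \ge 0$, and its eCPM bid is $b_i q_i$. Each position $k$ has two quality scores $\beta_k$ and $\eta_k$, both non-increasing in $k$, normalized so $\beta_1=\eta_1=1$. A brand (resp. non-brand) advertiser with quality $q$ shown in position $k$ is clicked with probability $\beta_k q$ (resp. $\eta_k q$). An allocation places distinct advertisers in the positions; its total expected welfare is $\sum_j b_{(j)} p_{(j)}$, where $b_{(j)}$ and $p_{(j)}$ are the bid and click probability of the ad in position $j$. "It is optimal to show a brand ad in position $k+1$" means that the maximum total expected welfare over allocations that agree with the fixed ads in positions $1,\dots,k$ and have a brand ad in position $k+1$ is at least the maximum over such allocations having a non-brand ad in position $k+1$. *)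

theory Defs
  imports Main "HOL-Library.Extended_Real"
begin

text \<open>Advertisers have type 'a; A is the (finite) set of
advertisers, brand i says whether i is a brand advertiser, and ecpm i = b_i * q_i
is the eCPM bid.
A brand (non-brand) ad with quality q in position j is clicked with probability
beta j * q (eta j * q), so its expected welfare is b * (beta j * q) = ecpm * beta j
(resp. ecpm * eta j).\<close>

definition valid_alloc :: "'a set \<Rightarrow> nat \<Rightarrow> (nat \<Rightarrow> 'a option) \<Rightarrow> bool" where
  "valid_alloc A s x \<longleftrightarrow>
     (\<forall>j. j \<notin> {1..s} \<longrightarrow> x j = None) \<and>
     (\<forall>j i. x j = Some i \<longrightarrow> i \<in> A) \<and>
     (\<forall>j j' i. x j = Some i \<and> x j' = Some i \<longrightarrow> j = j')"

definition click_factor :: "('a \<Rightarrow> bool) \<Rightarrow> (nat \<Rightarrow> real) \<Rightarrow> (nat \<Rightarrow> real) \<Rightarrow> 'a \<Rightarrow> nat \<Rightarrow> real" where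
  "click_factor brand \<beta> \<eta> i j = (if brand i then \<beta> j else \<eta> j)"

definition welfare ::
  "nat \<Rightarrow> ('a \<Rightarrow> bool) \<Rightarrow> ('a \<Rightarrow> real) \<Rightarrow> (nat \<Rightarrow> real) \<Rightarrow> (nat \<Rightarrow> real) \<Rightarrow> (nat \<Rightarrow> 'a option) \<Rightarrow> real" where
  "welfare s brand ecpm \<beta> \<eta> x =
     (\<Sum>j\<in>{1..s}. case x j of None \<Rightarrow> 0 | Some i \<Rightarrow> ecpm i * click_factor brand \<beta> \<eta> i j)"

definition allocs_with ::
  "'a set \<Rightarrow> nat \<Rightarrow> ('a \<Rightarrow> bool) \<Rightarrow> nat \<Rightarrow> (nat \<Rightarrow> 'a option) \<Rightarrow> bool \<Rightarrow> (nat \<Rightarrow> 'a option) set" where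
  "allocs_with A s brand k f bt =
     {x. valid_alloc A s x \<and> (\<forall>j\<in>{1..k}. x j = f j) \<and>
         (\<exists>i. x (Suc k) = Some i \<and> brand i = bt)}"

definition max_welfare ::
  "'a set \<Rightarrow> nat \<Rightarrow> ('a \<Rightarrow> bool) \<Rightarrow> ('a \<Rightarrow> real) \<Rightarrow> (nat \<Rightarrow> real) \<Rightarrow> (nat \<Rightarrow> real)
     \<Rightarrow> nat \<Rightarrow> (nat \<Rightarrow> 'a option) \<Rightarrow> bool \<Rightarrow> real" where
  "max_welfare A s brand ecpm \<beta> \<eta> k f bt =
     Max (welfare s brand ecpm \<beta> \<eta> ` allocs_with A s brand k f bt)"

definition brand_optimal ::
  "'a set \<Rightarrow> nat \<Rightarrow> ('a \<Rightarrow> bool) \<Rightarrow> ('a \<Rightarrow> real) \<Rightarrow> (nat \<Rightarrow> real) \<Rightarrow> (nat \<Rightarrow> real)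
     \<Rightarrow> nat \<Rightarrow> (nat \<Rightarrow> 'a option) \<Rightarrow> bool" where
  "brand_optimal A s brand ecpm \<beta> \<eta> k f \<longleftrightarrow>
     max_welfare A s brand ecpm \<beta> \<eta> k f True \<ge> max_welfare A s brand ecpm \<beta> \<eta> k f False"

definition remaining :: "'a set \<Rightarrow> nat \<Rightarrow> (nat \<Rightarrow> 'a option) \<Rightarrow> 'a set" where
  "remaining A k f = {i \<in> A. \<forall>j\<in>{1..k}. f j \<noteq> Some i}"

end

theory Submission
  imports Defs "HOL-Combinatorics.Transposition"
begin

text \<open>Let \<open>D v\<close> be the best welfare with a brand ad in position \<open>k+1\<close> minus the best
welfare with a non-brand ad there, as a function of the eCPM bid \<open>v\<close> of the top remaining brand
advertiser \<open>i\<^sub>0\<close>. The welfare of a fixed allocation is affine in \<open>v\<close> with slope \<open>\<beta>\<close> of the position of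
\<open>i\<^sub>0\<close> (or 0), hence at most \<open>\<beta>(k+1)\<close>; so both maxima are nondecreasing and
\<open>\<beta>(k+1)\<close>-Lipschitz. The brand maximum grows at rate at least \<open>\<beta>(k+1)\<close>, because
once \<open>i\<^sub>0\<close> bids at least as much as every other remaining brand advertiser, exchanging it
with the brand ad in position \<open>k+1\<close> never lowers the welfare. Hence \<open>D\<close> is nondecreasing
and Lipschitz, and its nonnegativity set is empty, everything, or a closed half-line.\<close>

lemma finite_valid_allocs:
  assumes "finite A"
  shows "finite {x. valid_alloc A s x}"
proof (rule finite_subset)
  show "{x. valid_alloc A s x} \<subseteq>
      {x. \<forall>j. (j \<in> {1..s} \<longrightarrow> x j \<in> insert None (Some ` A)) \<and> (j \<notin> {1..s} \<longrightarrow> x j = None)}"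
    unfolding valid_alloc_def by (auto intro: option.exhaust)
  show "finite {x. \<forall>j. (j \<in> {1..s} \<longrightarrow> x j \<in> insert None (Some ` A)) \<and> (j \<notin> {1..s} \<longrightarrow> x j = None)}"
    using assms by (intro finite_set_of_finite_funs) auto
qed

lemma finite_allocs_with: "finite A \<Longrightarrow> finite (allocs_with A s brand k f bt)"
  unfolding allocs_with_def by (rule finite_subset[OF _ finite_valid_allocs]) auto

lemma extend_in_allocs_with:
  assumes "valid_alloc A k f" "k < s" "n \<in> remaining A k f"
  shows "f(Suc k := Some n) \<in> allocs_with A s brand k f (brand n)"
proof -
  have "f j \<noteq> Some n" for j
    using assms(1,3) unfolding valid_alloc_def remaining_def by (cases "j \<in> {1..k}") auto
  with assms show ?thesis
    unfolding allocs_with_def valid_alloc_def remaining_def by auto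
qed

lemma valid_alloc_map_option:
  assumes "valid_alloc A s x" "inj g" "g ` A \<subseteq> A"
  shows "valid_alloc A s (map_option g \<circ> x)"
  using assms unfolding valid_alloc_def by (fastforce dest: injD)

definition exposure :: "nat \<Rightarrow> (nat \<Rightarrow> real) \<Rightarrow> (nat \<Rightarrow> 'a option) \<Rightarrow> 'a \<Rightarrow> real" where
  "exposure s \<beta> x i = (\<Sum>j\<in>{1..s}. if x j = Some i then \<beta> j else 0)"

lemma welfare_fun_upd_brand:
  assumes "brand i"
  shows "welfare s brand (ecpm(i := w)) \<beta> \<eta> x
     = welfare s brand ecpm \<beta> \<eta> x + (w - ecpm i) * exposure s \<beta> x i"
  unfolding welfare_def exposure_def sum_distrib_left sum.distrib[symmetric]
  by (rule sum.cong) (auto split: option.split simp: click_factor_def assms algebra_simps)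

lemma welfare_map_option:
  assumes "\<And>i. brand (g i) = brand i"
  shows "welfare s brand ecpm \<beta> \<eta> (map_option g \<circ> x) = welfare s brand (ecpm \<circ> g) \<beta> \<eta> x"
  unfolding welfare_def click_factor_def by (rule sum.cong) (auto split: option.split simp: assms)

lemma exposure_eq:
  assumes "valid_alloc A s x" "p \<in> {1..s}" "x p = Some i"
  shows "exposure s \<beta> x i = \<beta> p"
proof -
  have "x j = Some i \<longleftrightarrow> j = p" for j
    using assms unfolding valid_alloc_def by blast
  then show ?thesis
    unfolding exposure_def using assms(2) by (simp add: sum.delta)
qed

lemma exposure_bounds:
  assumes "valid_alloc A s x" "\<forall>j\<in>{1..k}. x j \<noteq> Some i" "k < s"
    and "antimono_on {1..s} \<beta>" "\<forall>j\<in>{1..s}. 0 \<le> \<beta> j"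
  shows "0 \<le> exposure s \<beta> x i" "exposure s \<beta> x i \<le> \<beta> (Suc k)"
proof -
  have "0 \<le> exposure s \<beta> x i \<and> exposure s \<beta> x i \<le> \<beta> (Suc k)"
  proof (cases "\<exists>p\<in>{1..s}. x p = Some i")
    case True
    then obtain p where p: "p \<in> {1..s}" "x p = Some i" by blast
    with assms(2) have "Suc k \<le> p" by force
    moreover have "\<beta> p \<le> \<beta> (Suc k)"
      using monotone_onD[OF assms(4), of "Suc k" p] p assms(3) \<open>Suc k \<le> p\<close> by auto
    ultimately show ?thesis
      using p assms(5) by (simp add: exposure_eq[OF assms(1) p])
  next
    case False
    then have "exposure s \<beta> x i = 0" unfolding exposure_def by (intro sum.neutral) auto
    with assms(3,5) show ?thesis by simp
  qed
  then show "0 \<le> exposure s \<beta> x i" "exposure s \<beta> x i \<le> \<beta> (Suc k)" by auto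
qed

lemma Max_image_bounded_increase:
  fixes F G :: "'a \<Rightarrow> 'b::linordered_ab_group_add"
  assumes "finite X" "X \<noteq> {}" "\<And>x. x \<in> X \<Longrightarrow> F x \<le> G x" "\<And>x. x \<in> X \<Longrightarrow> G x \<le> F x + d"
  shows "Max (F ` X) \<le> Max (G ` X)" "Max (G ` X) \<le> Max (F ` X) + d"
proof -
  have "F x \<le> Max (G ` X)" if "x \<in> X" for x
    by (rule order_trans[OF assms(3)[OF that]]) (simp add: assms(1) that)
  then show "Max (F ` X) \<le> Max (G ` X)"
    using assms(1,2) by simp
  have "G x \<le> Max (F ` X) + d" if "x \<in> X" for x
    by (rule order_trans[OF assms(4)[OF that]]) (simp add: assms(1) that)
  then show "Max (G ` X) \<le> Max (F ` X) + d"
    using assms(1,2) by simp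
qed

lemma max_welfare_mono_lipschitz:
  assumes "finite A" "k < s" "antimono_on {1..s} \<beta>" "\<forall>j\<in>{1..s}. 0 \<le> \<beta> j"
    and "brand i0" "i0 \<in> remaining A k f" "allocs_with A s brand k f bt \<noteq> {}" "v \<le> v'"
  shows "max_welfare A s brand (ecpm(i0 := v)) \<beta> \<eta> k f bt \<le> max_welfare A s brand (ecpm(i0 := v')) \<beta> \<eta> k f bt"
    and "max_welfare A s brand (ecpm(i0 := v')) \<beta> \<eta> k f bt
      \<le> max_welfare A s brand (ecpm(i0 := v)) \<beta> \<eta> k f bt + (v' - v) * \<beta> (Suc k)"
proof -
  have "welfare s brand (ecpm(i0 := v)) \<beta> \<eta> x \<le> welfare s brand (ecpm(i0 := v')) \<beta> \<eta> x \<and>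
        welfare s brand (ecpm(i0 := v')) \<beta> \<eta> x
          \<le> welfare s brand (ecpm(i0 := v)) \<beta> \<eta> x + (v' - v) * \<beta> (Suc k)"
    if x: "x \<in> allocs_with A s brand k f bt" for x
  proof -
    have "valid_alloc A s x" "\<forall>j\<in>{1..k}. x j \<noteq> Some i0"
      using x assms(6) unfolding allocs_with_def remaining_def by auto
    from exposure_bounds[OF this assms(2-4)] assms(8) show ?thesis
      using welfare_fun_upd_brand[where brand = brand and i = i0, OF assms(5), of s "ecpm(i0 := v)" v' \<beta> \<eta> x]
      by (auto intro: mult_left_mono)
  qed
  with Max_image_bounded_increase[OF finite_allocs_with[OF assms(1)] assms(7)]
  show "max_welfare A s brand (ecpm(i0 := v)) \<beta> \<eta> k f bt \<le> max_welfare A s brand (ecpm(i0 := v')) \<beta> \<eta> k f bt"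
    and "max_welfare A s brand (ecpm(i0 := v')) \<beta> \<eta> k f bt
      \<le> max_welfare A s brand (ecpm(i0 := v)) \<beta> \<eta> k f bt + (v' - v) * \<beta> (Suc k)"
    unfolding max_welfare_def by blast+
qed

lemma transpose_in_allocs_with:
  assumes x: "x \<in> allocs_with A s brand k f bt"
    and "a \<in> remaining A k f" "b \<in> remaining A k f" "brand a = brand b"
  shows "map_option (transpose a b) \<circ> x \<in> allocs_with A s brand k f bt"
proof -
  have valid: "valid_alloc A s x" and agree: "\<forall>j\<in>{1..k}. x j = f j"
    and next_slot: "\<exists>i. x (Suc k) = Some i \<and> brand i = bt"
    using x unfolding allocs_with_def by auto
  have "valid_alloc A s (map_option (transpose a b) \<circ> x)"
    using valid assms(2,3) unfolding remaining_def
    by (intro valid_alloc_map_option) (auto simp: inj_transpose)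
  moreover have "(map_option (transpose a b) \<circ> x) j = f j" if "j \<in> {1..k}" for j
    using that agree assms(2,3) unfolding remaining_def
    by (cases "f j") (auto simp: transpose_def)
  moreover have "brand (transpose a b i) = brand i" for i
    using assms(4) by (simp add: transpose_def)
  ultimately show ?thesis
    using next_slot unfolding allocs_with_def by auto
qed

lemma welfare_transpose_brands:
  assumes "brand a" "brand b"
  shows "welfare s brand ecpm \<beta> \<eta> (map_option (transpose a b) \<circ> x)
    = welfare s brand ecpm \<beta> \<eta> x + (ecpm b - ecpm a) * (exposure s \<beta> x a - exposure s \<beta> x b)"
proof -
  have "brand (transpose a b i) = brand i" for i
    using assms by (simp add: transpose_def)
  then have "welfare s brand ecpm \<beta> \<eta> (map_option (transpose a b) \<circ> x)
      = welfare s brand (ecpm \<circ> transpose a b) \<beta> \<eta> x"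
    by (rule welfare_map_option)
  also have "ecpm \<circ> transpose a b = ecpm(a := ecpm b, b := ecpm a)"
    by (auto simp: transpose_def)
  finally show ?thesis
    unfolding welfare_fun_upd_brand[where brand = brand and i = b, OF assms(2)]
      welfare_fun_upd_brand[where brand = brand and i = a, OF assms(1)]
    by (simp add: algebra_simps comp_def)
qed

lemma top_brand_into_next_slot:
  assumes "k < s" "antimono_on {1..s} \<beta>" "\<forall>j\<in>{1..s}. 0 \<le> \<beta> j"
    and "brand i0" "i0 \<in> remaining A k f" "\<forall>b\<in>remaining A k f. brand b \<longrightarrow> ecpm b \<le> ecpm i0"
    and x: "x \<in> allocs_with A s brand k f True"
  obtains x' where "x' \<in> allocs_with A s brand k f True" "x' (Suc k) = Some i0"
    "welfare s brand ecpm \<beta> \<eta> x \<le> welfare s brand ecpm \<beta> \<eta> x'"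
proof -
  have valid: "valid_alloc A s x" and agree: "\<forall>j\<in>{1..k}. x j = f j"
    using x unfolding allocs_with_def by auto
  obtain b where b: "x (Suc k) = Some b" "brand b"
    using x unfolding allocs_with_def by auto
  have "b \<in> A" "\<forall>j\<in>{1..k}. f j \<noteq> Some b"
    using valid b agree unfolding valid_alloc_def by (metis, fastforce)
  then have b_rem: "b \<in> remaining A k f" unfolding remaining_def by simp
  define x' where "x' = map_option (transpose b i0) \<circ> x"
  have x': "x' \<in> allocs_with A s brand k f True" "x' (Suc k) = Some i0"
    unfolding x'_def using transpose_in_allocs_with[OF x b_rem assms(5)] b assms(4) by auto
  have "exposure s \<beta> x b = \<beta> (Suc k)"
    using exposure_eq[OF valid _ b(1)] assms(1) by simp
  moreover have "exposure s \<beta> x i0 \<le> \<beta> (Suc k)"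
    using valid agree assms(1-3,5) unfolding remaining_def by (intro exposure_bounds) auto
  moreover have "ecpm b \<le> ecpm i0" using assms(6) b_rem b(2) by blast
  ultimately have "welfare s brand ecpm \<beta> \<eta> x \<le> welfare s brand ecpm \<beta> \<eta> x'"
    unfolding x'_def welfare_transpose_brands[where brand = brand, OF b(2) assms(4)] by simp
  with x' show thesis by (rule that)
qed

lemma max_welfare_brand_slope:
  assumes "finite A" "k < s" "antimono_on {1..s} \<beta>" "\<forall>j\<in>{1..s}. 0 \<le> \<beta> j"
    and "brand i0" "i0 \<in> remaining A k f" "allocs_with A s brand k f True \<noteq> {}"
    and "\<forall>b\<in>remaining A k f. brand b \<and> b \<noteq> i0 \<longrightarrow> ecpm b \<le> v" "v \<le> v'"
  shows "max_welfare A s brand (ecpm(i0 := v)) \<beta> \<eta> k f True + (v' - v) * \<beta> (Suc k)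
      \<le> max_welfare A s brand (ecpm(i0 := v')) \<beta> \<eta> k f True"
proof -
  let ?X = "allocs_with A s brand k f True"
  have fin: "finite ?X" using assms(1) by (rule finite_allocs_with)
  obtain y where y: "y \<in> ?X" "max_welfare A s brand (ecpm(i0 := v)) \<beta> \<eta> k f True
      = welfare s brand (ecpm(i0 := v)) \<beta> \<eta> y"
    unfolding max_welfare_def using Max_in[of "welfare s brand (ecpm(i0 := v)) \<beta> \<eta> ` ?X"] fin assms(7)
    by fastforce
  have "\<forall>b\<in>remaining A k f. brand b \<longrightarrow> (ecpm(i0 := v)) b \<le> (ecpm(i0 := v)) i0"
    using assms(8) by auto
  then obtain x where x: "x \<in> ?X" "x (Suc k) = Some i0"
    "welfare s brand (ecpm(i0 := v)) \<beta> \<eta> y \<le> welfare s brand (ecpm(i0 := v)) \<beta> \<eta> x"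
    using top_brand_into_next_slot[OF assms(2-6) _ y(1)] by blast
  have "exposure s \<beta> x i0 = \<beta> (Suc k)"
    using x(1,2) assms(2) unfolding allocs_with_def by (auto intro: exposure_eq)
  then have "welfare s brand (ecpm(i0 := v')) \<beta> \<eta> x
      = welfare s brand (ecpm(i0 := v)) \<beta> \<eta> x + (v' - v) * \<beta> (Suc k)"
    using welfare_fun_upd_brand[where brand = brand and i = i0, OF assms(5), of s "ecpm(i0 := v)" v'] by simp
  moreover have "welfare s brand (ecpm(i0 := v')) \<beta> \<eta> x \<le> max_welfare A s brand (ecpm(i0 := v')) \<beta> \<eta> k f True"
    unfolding max_welfare_def using fin x(1) by simp
  ultimately show ?thesis using y(2) x(3) by simp
qed

lemma nonneg_at_Inf_nonneg_set:
  fixes D :: "real \<Rightarrow> real"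
  assumes lip: "\<And>v v'. m \<le> v \<Longrightarrow> v \<le> v' \<Longrightarrow> D v' \<le> D v + (v' - v) * L" and "0 \<le> L"
    and "m \<le> v\<^sub>1" "0 \<le> D v\<^sub>1"
  defines "t \<equiv> Inf {v. m \<le> v \<and> 0 \<le> D v}"
  shows "m \<le> t" "0 \<le> D t"
proof -
  let ?S = "{v. m \<le> v \<and> 0 \<le> D v}"
  have ne: "?S \<noteq> {}" using assms(3,4) by auto
  have bdd: "bdd_below ?S" by (rule bdd_belowI[of _ m]) auto
  show tm: "m \<le> t" unfolding t_def using ne by (intro cInf_greatest) auto
  show "0 \<le> D t"
  proof (rule ccontr)
    assume "\<not> 0 \<le> D t"
    then have neg: "D t < 0" by simp
    define \<delta> where "\<delta> = - D t / (L + 1)"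
    have "0 < \<delta>" unfolding \<delta>_def using neg assms(2) by (simp add: divide_neg_pos)
    then obtain v where v: "v \<in> ?S" "v < t + \<delta>"
      using cInf_less_iff[OF ne bdd, of "t + \<delta>"] unfolding t_def by auto
    have "t \<le> v" unfolding t_def using bdd v(1) by (simp add: cInf_lower)
    have "D v \<le> D t + (v - t) * L" using lip[OF tm \<open>t \<le> v\<close>] .
    also have "(v - t) * L \<le> \<delta> * L" using v(2) assms(2) by (intro mult_right_mono) auto
    also have "\<delta> * L < - D t"
      using neg assms(2) unfolding \<delta>_def by (simp add: field_simps)
    finally show False using v(1) by simp
  qed
qed

lemma threshold_trichotomy:
  fixes D :: "real \<Rightarrow> real"
  assumes mono: "\<And>v v'. m \<le> v \<Longrightarrow> v \<le> v' \<Longrightarrow> D v \<le> D v'"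
    and lip: "\<And>v v'. m \<le> v \<Longrightarrow> v \<le> v' \<Longrightarrow> D v' \<le> D v + (v' - v) * L" and "0 \<le> L"
  shows "(\<forall>v\<ge>m. D v < 0) \<or> (\<forall>v\<ge>m. 0 \<le> D v) \<or> (\<exists>t>m. \<forall>v\<ge>m. 0 \<le> D v \<longleftrightarrow> t \<le> v)"
proof -
  consider "0 \<le> D m" | "\<forall>v\<ge>m. D v < 0" | v\<^sub>1 where "D m < 0" "m \<le> v\<^sub>1" "0 \<le> D v\<^sub>1"
    by (metis not_le)
  then show ?thesis
  proof cases
    case 1
    then show ?thesis using mono by (meson order_trans order_refl)
  next
    case 2
    then show ?thesis by blast
  next
    case 3
    define t where "t = Inf {v. m \<le> v \<and> 0 \<le> D v}"
    have tm: "m \<le> t" and Dt: "0 \<le> D t"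
      using nonneg_at_Inf_nonneg_set[OF lip assms(3) 3(2,3)] unfolding t_def by blast+
    have "t \<noteq> m" using Dt 3(1) by auto
    moreover have "0 \<le> D v \<longleftrightarrow> t \<le> v" if "m \<le> v" for v
    proof
      assume "0 \<le> D v"
      with that show "t \<le> v" unfolding t_def by (intro cInf_lower bdd_belowI[of _ m]) auto
    next
      assume "t \<le> v"
      with Dt mono[OF tm] show "0 \<le> D v" by (meson order_trans)
    qed
    ultimately show ?thesis using tm by force
  qed
qed

lemma threshold_cases_exclusive:
  fixes P :: "real \<Rightarrow> bool"
  assumes "(\<forall>v\<ge>m. \<not> P v) \<or> (\<forall>v\<ge>m. P v) \<or> (\<exists>t>m. \<forall>v\<ge>m. P v \<longleftrightarrow> t \<le> v)"
  shows "((\<forall>v\<ge>m. \<not> P v) \<and> \<not> (\<forall>v\<ge>m. P v) \<and> \<not> (\<exists>t>m. \<forall>v\<ge>m. P v \<longleftrightarrow> t \<le> v))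
       \<or> (\<not> (\<forall>v\<ge>m. \<not> P v) \<and> (\<forall>v\<ge>m. P v) \<and> \<not> (\<exists>t>m. \<forall>v\<ge>m. P v \<longleftrightarrow> t \<le> v))
       \<or> (\<not> (\<forall>v\<ge>m. \<not> P v) \<and> \<not> (\<forall>v\<ge>m. P v) \<and> (\<exists>t>m. \<forall>v\<ge>m. P v \<longleftrightarrow> t \<le> v))"
  using assms by (metis less_le_not_le order_refl)

theorem theorem5:
  fixes A :: "'a set" and brand :: "'a \<Rightarrow> bool" and ecpm :: "'a \<Rightarrow> real"
    and s k :: nat and \<beta> \<eta> :: "nat \<Rightarrow> real"
    and f :: "nat \<Rightarrow> 'a option" and i0 :: 'a
  assumes finA: "finite A"
    and ecpm_nonneg: "\<forall>i\<in>A. ecpm i \<ge> 0"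
    and beta_one: "\<beta> 1 = 1" and eta_one: "\<eta> 1 = 1"
    and beta_mono: "\<forall>i j. 1 \<le> i \<and> i \<le> j \<and> j \<le> s \<longrightarrow> \<beta> j \<le> \<beta> i"
    and eta_mono: "\<forall>i j. 1 \<le> i \<and> i \<le> j \<and> j \<le> s \<longrightarrow> \<eta> j \<le> \<eta> i"
    and beta_nonneg: "\<forall>j\<in>{1..s}. \<beta> j \<ge> 0"
    and eta_nonneg: "\<forall>j\<in>{1..s}. \<eta> j \<ge> 0"
    and k_lt: "k < s"
    and f_valid: "valid_alloc A k f"
    and f_filled: "\<forall>j\<in>{1..k}. f j \<noteq> None"
    and nonbrand_rem: "\<exists>i\<in>remaining A k f. \<not> brand i"
    and i0_rem: "i0 \<in> remaining A k f" and i0_brand: "brand i0"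
  defines "m \<equiv> Max (insert 0 (ecpm ` {i\<in>remaining A k f. brand i \<and> i \<noteq> i0}))"
    and "P \<equiv> (\<lambda>v::real. brand_optimal A s brand (ecpm(i0 := v)) \<beta> \<eta> k f)"
  shows "((\<forall>v\<ge>m. \<not> P v) \<and> \<not> (\<forall>v\<ge>m. P v) \<and> \<not> (\<exists>t>m. \<forall>v\<ge>m. P v \<longleftrightarrow> t \<le> v))
       \<or> (\<not> (\<forall>v\<ge>m. \<not> P v) \<and> (\<forall>v\<ge>m. P v) \<and> \<not> (\<exists>t>m. \<forall>v\<ge>m. P v \<longleftrightarrow> t \<le> v))
       \<or> (\<not> (\<forall>v\<ge>m. \<not> P v) \<and> \<not> (\<forall>v\<ge>m. P v) \<and> (\<exists>t>m. \<forall>v\<ge>m. P v \<longleftrightarrow> t \<le> v))"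
proof -
  have beta_antimono: "antimono_on {1..s} \<beta>" using beta_mono by (intro monotone_onI) auto
  have allocs_ne: "allocs_with A s brand k f bt \<noteq> {}" for bt
  proof -
    obtain n where "n \<in> remaining A k f" "brand n = bt"
      using nonbrand_rem i0_rem i0_brand by (cases bt) auto
    then show ?thesis using extend_in_allocs_with[OF f_valid k_lt] by blast
  qed
  have i0_highest: "\<forall>b\<in>remaining A k f. brand b \<and> b \<noteq> i0 \<longrightarrow> ecpm b \<le> v" if "m \<le> v" for v
  proof -
    have "finite (remaining A k f)" using finA unfolding remaining_def by simp
    then show ?thesis using that unfolding m_def by (auto intro: order_trans[OF Max_ge])
  qed
  define D where "D v = max_welfare A s brand (ecpm(i0 := v)) \<beta> \<eta> k f True
      - max_welfare A s brand (ecpm(i0 := v)) \<beta> \<eta> k f False" for v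
  note lipschitz = max_welfare_mono_lipschitz[OF finA k_lt beta_antimono beta_nonneg i0_brand i0_rem allocs_ne]
  note slope = max_welfare_brand_slope[OF finA k_lt beta_antimono beta_nonneg i0_brand i0_rem allocs_ne]
  have "(\<forall>v\<ge>m. D v < 0) \<or> (\<forall>v\<ge>m. 0 \<le> D v) \<or> (\<exists>t>m. \<forall>v\<ge>m. 0 \<le> D v \<longleftrightarrow> t \<le> v)"
  proof (rule threshold_trichotomy)
    fix v v' assume v: "m \<le> v" "v \<le> v'"
    note bounds = lipschitz[where ecpm = ecpm and \<eta> = \<eta>, OF v(2)]
    note brand_gain = slope[where ecpm = ecpm and \<eta> = \<eta>, OF i0_highest[OF v(1)] v(2)]
    show "D v \<le> D v'" "D v' \<le> D v + (v' - v) * \<beta> (Suc k)"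
      using bounds[of True] bounds[of False] brand_gain unfolding D_def by linarith+
  qed (use beta_nonneg k_lt in simp)
  moreover have "P v \<longleftrightarrow> 0 \<le> D v" for v
    unfolding P_def D_def brand_optimal_def by simp
  ultimately show ?thesis by (intro threshold_cases_exclusive) (simp add: not_le)
qed

end
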